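(* For every base $\mathcal{B}$, atomic multisets $L,K$ and ILL formulae $\varphi,\psi,\chi$: if $\Vdash^L_{\mathcal{B}}\varphi\oplus\psi$, $\varphi\Vdash^K_{\mathcal{B}}\chi$ and $\psi\Vdash^K_{\mathcal{B}}\chi$, then $\Vdash^{L,K}_{\mathcal{B}}\chi$.
   Context: Fix a set $\mathbb{A}$ of propositional atoms. ILL formulae: $\phi ::= p\in\mathbb{A} \mid \top \mid 0 \mid 1 \mid \phi\multimap\phi \mid \phi\otimes\phi \mid \phi\,\&\,\phi \mid \phi\oplus\phi \mid\ !\phi$. All multisets are finite; "$\Gamma,\Delta$" denotes multiset union. Atomic rules and bases: an atomic sequent is $P\Rightarrow p$ with $P$ a multiset of atoms, $p$ an atom. An atomic box is a multiset of atomic sequents. An atomic rule is a triple $\langle\mathbf{A},\mathbf{S},p\rangle$ with $\mathbf{A}$ a multiset of atomic boxes, $\mathbf{S}$ an atomic box, $p$ an atom. A base is a set of atomic rules. An atom $p$ is persistent in $\mathcal{B}$ if some $\langle\varnothing,\mathbf{S},p\rangle\in\mathcal{B}$ has $\mathbf{S}\neq\varnothing$. Derivability $\vdash_{\mathcal{B}}$: (Ref) $p\vdash_{\mathcal{B}}p$; (App) if $\langle\mathbf{A},\mathbf{S},p\rangle\in\mathcal{B}$ with $\mathbf{A}=\{\mathbf{T}_1,\dots,\mathbf{T}_m\}$, and there are atomic multisets $C_1,\dots,C_n$ ($n\ge m$) and a multiset $D=\{d_{m+1},\dots,d_n\}$ of atoms persistent in $\mathcal{B}$ such that $C_i,Q\vdash_{\mathcal{B}}q$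 for every $i\le m$ and every $Q\Rightarrow q\in\mathbf{T}_i$, $C_j\vdash_{\mathcal{B}}d_j$ for every $m<j\le n$, and $D,U\vdash_{\mathcal{B}}v$ for every $U\Rightarrow v\in\mathbf{S}$, then $C_1,\dots,C_n\vdash_{\mathcal{B}}p$. Support $\Vdash^L_{\mathcal{B}}$ (base $\mathcal{B}$, atomic multiset $L$), by induction on formulae: $\Vdash^L_{\mathcal{B}}p$ iff $L\vdash_{\mathcal{B}}p$; $\Vdash^L_{\mathcal{B}}\varphi\multimap\psi$ iff $\varphi\Vdash^L_{\mathcal{B}}\psi$; $\Vdash^L_{\mathcal{B}}\varphi\otimes\psi$ iff for all $\mathcal{C}\supseteq\mathcal{B}$, atomic $K$, atoms $p$: if $\varphi,\psi\Vdash^K_{\mathcal{C}}p$ then $\Vdash^{L,K}_{\mathcal{C}}p$; $\Vdash^L_{\mathcal{B}}1$ iff for all $\mathcal{C}\supseteq\mathcal{B}$, $K$, $p$: if $\Vdash^K_{\mathcal{C}}p$ then $\Vdash^{L,K}_{\mathcal{C}}p$; $\Vdash^L_{\mathcal{B}}\varphi\&\psi$ iff $\Vdash^L_{\mathcal{B}}\varphi$ and $\Vdash^L_{\mathcal{B}}\psi$; $\Vdash^L_{\mathcal{B}}\varphi\oplus\psi$ iff for all $\mathcal{C}\supseteq\mathcal{B}$, $K$, $p$: if $\varphi\Vdash^K_{\mathcal{C}}p$ and $\psi\Vdash^K_{\mathcal{C}}p$ then $\Vdash^{L,K}_{\mathcal{C}}p$; $\Vdash^L_{\mathcal{B}}0$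 iff $\Vdash^{L,K}_{\mathcal{B}}p$ for all atoms $p$ and atomic $K$; $\Vdash^L_{\mathcal{B}}\top$ always; $\Vdash^L_{\mathcal{B}}!\varphi$ iff for all $\mathcal{C}\supseteq\mathcal{B}$, $K$, $p$: if (for all $\mathcal{D}\supseteq\mathcal{C}$, $\Vdash^{\varnothing}_{\mathcal{D}}\varphi$ implies $\Vdash^K_{\mathcal{D}}p$) then $\Vdash^{L,K}_{\mathcal{C}}p$. For nonempty multisets: $\Vdash^L_{\mathcal{B}}\Gamma,\Delta$ iff $L=K,M$ with $\Vdash^K_{\mathcal{B}}\Gamma$ and $\Vdash^M_{\mathcal{B}}\Delta$. For a nonempty antecedent written $!\Delta,\Theta$, where $!\Delta$ collects the formulae with top-level connective $!$ (with $\Delta$ the formulae under those $!$) and $\Theta$ contains none: $!\Delta,\Theta\Vdash^L_{\mathcal{B}}\varphi$ iff for all $\mathcal{C}\supseteq\mathcal{B}$ and atomic $K$, if $\Vdash^{\varnothing}_{\mathcal{C}}\delta$ for every $\delta\in\Delta$ and $\Vdash^K_{\mathcal{C}}\Theta$ then $\Vdash^{L,K}_{\mathcal{C}}\varphi$ (when $\Theta$ is empty, $K$ is empty). An empty antecedent: $\varnothing\Vdash^L_{\mathcal{B}}\varphi$ means $\Vdash^L_{\mathcal{B}}\varphi$. *)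

theory Defs
  imports Main "HOL-Library.Multiset"
begin

datatype 'a form =
    Atom 'a
  | Top
  | Zero
  | One
  | Lolli "'a form" "'a form"
  | Tensor "'a form" "'a form"
  | With "'a form" "'a form"
  | Plus "'a form" "'a form"
  | Bang "'a form"

type_synonym 'a aseq = "'a multiset \<times> 'a"
type_synonym 'a abox = "'a aseq multiset"
type_synonym 'a arule = "'a abox multiset \<times> 'a abox \<times> 'a"
type_synonym 'a base = "'a arule set"

definition persistent :: "'a base \<Rightarrow> 'a \<Rightarrow> bool" where
  "persistent B p \<longleftrightarrow> (\<exists>S. S \<noteq> {#} \<and> ({#}, S, p) \<in> B)"

text \<open>Derivability in a base. The boxes T_1..T_m of A are listed as Ts (mset Ts = A),
  the contexts C_1..C_n as Cs (length n), and the persistent atoms d_{m+1}..d_n as ds.\<close>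
inductive deriv :: "'a base \<Rightarrow> 'a multiset \<Rightarrow> 'a \<Rightarrow> bool" for B where
  Ref: "deriv B {#p#} p"
| App: "\<lbrakk> (A, S, p) \<in> B; mset Ts = A; length Ts \<le> length Cs;
          length ds = length Cs - length Ts;
          \<forall>d\<in>set ds. persistent B d;
          \<forall>i<length Ts. \<forall>Qq\<in>#Ts ! i. deriv B (Cs ! i + fst Qq) (snd Qq);
          \<forall>j<length ds. deriv B (Cs ! (length Ts + j)) (ds ! j);
          \<forall>Uv\<in>#S. deriv B (mset ds + fst Uv) (snd Uv) \<rbrakk>
        \<Longrightarrow> deriv B (sum_list Cs) p"

text \<open>Support. supp B L phi stands for  |-^L_B phi.  The antecedent clauses are unfolded
  directly: for a single formula phi, "phi |-^L_B chi" is: if phi = !delta then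
  for all C \<supseteq> B, |-^{}_C delta implies |-^L_C chi; otherwise for all C \<supseteq> B and K,
  |-^K_C phi implies |-^{L,K}_C chi.  For two formulae phi, psi, the !-formulae must be
  supported with the empty multiset and the remaining ones split K.\<close>
fun supp :: "'a base \<Rightarrow> 'a multiset \<Rightarrow> 'a form \<Rightarrow> bool" where
  "supp B L (Atom p) = deriv B L p"
| "supp B L (Lolli \<phi> \<psi>) =
     (case \<phi> of
        Bang \<delta> \<Rightarrow> (\<forall>C. B \<subseteq> C \<longrightarrow> supp C {#} \<delta> \<longrightarrow> supp C L \<psi>)
      | _ \<Rightarrow> (\<forall>C K. B \<subseteq> C \<longrightarrow> supp C K \<phi> \<longrightarrow> supp C (L + K) \<psi>))"
| "supp B L (Tensor \<phi> \<psi>) =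
     (\<forall>C K p. B \<subseteq> C \<longrightarrow>
        (\<forall>D M. C \<subseteq> D \<longrightarrow>
           (\<exists>M1 M2. M = M1 + M2 \<and>
              (case \<phi> of Bang \<delta> \<Rightarrow> M1 = {#} \<and> supp D {#} \<delta> | _ \<Rightarrow> supp D M1 \<phi>) \<and>
              (case \<psi> of Bang \<delta> \<Rightarrow> M2 = {#} \<and> supp D {#} \<delta> | _ \<Rightarrow> supp D M2 \<psi>))
           \<longrightarrow> deriv D (K + M) p)
        \<longrightarrow> deriv C (L + K) p)"
| "supp B L One =
     (\<forall>C K p. B \<subseteq> C \<longrightarrow> deriv C K p \<longrightarrow> deriv C (L + K) p)"
| "supp B L (With \<phi> \<psi>) = (supp B L \<phi> \<and> supp B L \<psi>)"
| "supp B L (Plus \<phi> \<psi>) =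
     (\<forall>C K p. B \<subseteq> C \<longrightarrow>
        (case \<phi> of
           Bang \<delta> \<Rightarrow> (\<forall>D. C \<subseteq> D \<longrightarrow> supp D {#} \<delta> \<longrightarrow> deriv D K p)
         | _ \<Rightarrow> (\<forall>D M. C \<subseteq> D \<longrightarrow> supp D M \<phi> \<longrightarrow> deriv D (K + M) p)) \<longrightarrow>
        (case \<psi> of
           Bang \<delta> \<Rightarrow> (\<forall>D. C \<subseteq> D \<longrightarrow> supp D {#} \<delta> \<longrightarrow> deriv D K p)
         | _ \<Rightarrow> (\<forall>D M. C \<subseteq> D \<longrightarrow> supp D M \<psi> \<longrightarrow> deriv D (K + M) p)) \<longrightarrow>
        deriv C (L + K) p)"
| "supp B L Zero = (\<forall>K p. deriv B (L + K) p)"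
| "supp B L Top = True"
| "supp B L (Bang \<phi>) =
     (\<forall>C K p. B \<subseteq> C \<longrightarrow>
        (\<forall>D. C \<subseteq> D \<longrightarrow> supp D {#} \<phi> \<longrightarrow> deriv D K p) \<longrightarrow>
        deriv C (L + K) p)"

definition supp_seq :: "'a form \<Rightarrow> 'a base \<Rightarrow> 'a multiset \<Rightarrow> 'a form \<Rightarrow> bool" where
  "supp_seq \<phi> B L \<chi> =
     (case \<phi> of
        Bang \<delta> \<Rightarrow> (\<forall>C. B \<subseteq> C \<longrightarrow> supp C {#} \<delta> \<longrightarrow> supp C L \<chi>)
      | _ \<Rightarrow> (\<forall>C K. B \<subseteq> C \<longrightarrow> supp C K \<phi> \<longrightarrow> supp C (L + K) \<chi>))"

end

theory Submission
  imports Defs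
begin

text \<open>The support of \<open>\<phi> \<oplus> \<psi>\<close> can only be eliminated into
  atoms, so every other conclusion has to be reduced to atomic ones. The clauses for \<open>1\<close>, \<open>\<otimes>\<close>, \<open>\<oplus>\<close> and \<open>!\<close> all say that every continuation
  admitted in an extension \<open>C\<close> of the base yields an atomic derivation over \<open>C\<close>. Eliminating
  the \<open>\<oplus>\<close> there only needs the continuation to stay admissible in larger bases. An implication
  \<open>\<alpha> \<multimap> \<beta>\<close> is handled by moving the support of \<open>\<alpha>\<close> into the context \<open>K\<close> and using the
  induction hypothesis for \<open>\<beta>\<close>, and \<open>&\<close> is componentwise.\<close>

lemma deriv_base_mono: "deriv B L p \<Longrightarrow> B \<subseteq> B' \<Longrightarrow> deriv B' L p"
proof (induction rule: deriv.induct)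
  case (Ref p)
  show ?case by (rule deriv.Ref)
next
  case (App A S p Ts Cs ds)
  have "\<forall>d\<in>set ds. persistent B' d" using App unfolding persistent_def by blast
  then show ?case using App by (intro deriv.App[of A S p]) auto
qed

definition supp_ante :: "'a form \<Rightarrow> 'a base \<Rightarrow> 'a multiset \<Rightarrow> bool" where
  "supp_ante \<phi> B M = (case \<phi> of Bang \<delta> \<Rightarrow> M = {#} \<and> supp B {#} \<delta> | _ \<Rightarrow> supp B M \<phi>)"

lemma supp_seq_iff:
  "supp_seq \<phi> B L \<chi> \<longleftrightarrow> (\<forall>C M. B \<subseteq> C \<longrightarrow> supp_ante \<phi> C M \<longrightarrow> supp C (L + M) \<chi>)"
  by (cases \<phi>) (auto simp: supp_ante_def supp_seq_def simp del: supp.simps)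

lemma supp_Lolli_iff:
  "supp B L (Lolli \<phi> \<psi>) \<longleftrightarrow> (\<forall>C M. B \<subseteq> C \<longrightarrow> supp_ante \<phi> C M \<longrightarrow> supp C (L + M) \<psi>)"
  by (cases \<phi>) (auto simp: supp_ante_def)

lemma supp_Tensor_iff:
  "supp B L (Tensor \<phi> \<psi>) \<longleftrightarrow> (\<forall>C K p. B \<subseteq> C \<longrightarrow>
     (\<forall>D M. C \<subseteq> D \<longrightarrow> (\<exists>M1 M2. M = M1 + M2 \<and> supp_ante \<phi> D M1 \<and> supp_ante \<psi> D M2)
        \<longrightarrow> deriv D (K + M) p) \<longrightarrow> deriv C (L + K) p)"
  unfolding supp.simps supp_ante_def ..

lemma case_Bang_deriv_eq_supp_ante:
  "(case \<phi> of
      Bang \<delta> \<Rightarrow> (\<forall>D. C \<subseteq> D \<longrightarrow> supp D {#} \<delta> \<longrightarrow> deriv D K p)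
    | _ \<Rightarrow> (\<forall>D M. C \<subseteq> D \<longrightarrow> supp D M \<phi> \<longrightarrow> deriv D (K + M) p))
   \<longleftrightarrow> (\<forall>D M. C \<subseteq> D \<longrightarrow> supp_ante \<phi> D M \<longrightarrow> deriv D (K + M) p)"
  by (cases \<phi>) (auto simp: supp_ante_def simp del: supp.simps)

lemma supp_Plus_iff:
  "supp B L (Plus \<phi> \<psi>) \<longleftrightarrow> (\<forall>C K p. B \<subseteq> C \<longrightarrow>
     (\<forall>D M. C \<subseteq> D \<longrightarrow> supp_ante \<phi> D M \<longrightarrow> deriv D (K + M) p) \<and>
     (\<forall>D M. C \<subseteq> D \<longrightarrow> supp_ante \<psi> D M \<longrightarrow> deriv D (K + M) p) \<longrightarrow>
     deriv C (L + K) p)"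
  by (simp only: supp.simps(6) case_Bang_deriv_eq_supp_ante imp_conjL)

lemma supp_base_mono: "supp B L \<chi> \<Longrightarrow> B \<subseteq> B' \<Longrightarrow> supp B' L \<chi>"
proof (induction \<chi> arbitrary: B L B')
  case (Atom p) then show ?case by (simp add: deriv_base_mono)
next
  case Top then show ?case by simp
next
  case Zero then show ?case by (auto intro: deriv_base_mono)
next
  case One then show ?case unfolding supp.simps(4) by (meson order_trans)
next
  case (Lolli \<alpha> \<beta>) then show ?case unfolding supp_Lolli_iff by (meson order_trans)
next
  case (Tensor \<alpha> \<beta>) then show ?case unfolding supp_Tensor_iff by (meson order_trans)
next
  case (With \<alpha> \<beta>) then show ?case by auto
next
  case (Plus \<alpha> \<beta>) then show ?case unfolding supp_Plus_iff by (meson order_trans)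
next
  case (Bang \<alpha>) then show ?case unfolding supp.simps(9) by (meson order_trans)
qed

lemma supp_ante_base_mono: "supp_ante \<phi> B M \<Longrightarrow> B \<subseteq> B' \<Longrightarrow> supp_ante \<phi> B' M"
  by (cases \<phi>) (auto simp: supp_ante_def simp del: supp.simps intro: supp_base_mono)

lemma supp_seq_Lolli_apply:
  assumes "supp_seq \<theta> B K (Lolli \<alpha> \<beta>)" and "B \<subseteq> C" and "supp_ante \<alpha> C M"
  shows "supp_seq \<theta> C (K + M) \<beta>"
  unfolding supp_seq_iff
proof (intro allI impI)
  fix D N assume "C \<subseteq> D" and "supp_ante \<theta> D N"
  with assms(1,2) have "supp D (K + N) (Lolli \<alpha> \<beta>)"
    unfolding supp_seq_iff by (meson order_trans)
  moreover have "supp_ante \<alpha> D M" using assms(3) \<open>C \<subseteq> D\<close> by (rule supp_ante_base_mono)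
  ultimately have "supp D (K + N + M) \<beta>" unfolding supp_Lolli_iff by blast
  then show "supp D (K + M + N) \<beta>" by (simp add: ac_simps)
qed

lemma supp_Plus_elim_Atom:
  "supp B L (Plus \<phi> \<psi>) \<Longrightarrow> supp_seq \<phi> B K (Atom p) \<Longrightarrow> supp_seq \<psi> B K (Atom p)
    \<Longrightarrow> supp B (L + K) (Atom p)"
  unfolding supp_Plus_iff supp_seq_iff supp.simps(1) by blast

lemma supp_seq_Zero_Atom: "supp_seq \<theta> B K Zero \<Longrightarrow> supp_seq \<theta> B (K + K') (Atom p)"
  unfolding supp_seq_iff supp.simps(1,7) by (metis add.commute add.assoc)

lemma supp_Plus_elim_Zero:
  assumes "supp B L (Plus \<phi> \<psi>)" and "supp_seq \<phi> B K Zero" and "supp_seq \<psi> B K Zero"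
  shows "supp B (L + K) Zero"
proof -
  have "deriv B (L + (K + K')) p" for K' p
    using supp_Plus_elim_Atom[OF assms(1) supp_seq_Zero_Atom[OF assms(2)] supp_seq_Zero_Atom[OF assms(3)]]
    by simp
  then show ?thesis by (auto simp: add.assoc)
qed

lemma supp_Plus_elim_Lolli:
  assumes IH: "\<And>B L K. supp B L (Plus \<phi> \<psi>) \<Longrightarrow> supp_seq \<phi> B K \<beta> \<Longrightarrow> supp_seq \<psi> B K \<beta>
      \<Longrightarrow> supp B (L + K) \<beta>"
    and "supp B L (Plus \<phi> \<psi>)" and "supp_seq \<phi> B K (Lolli \<alpha> \<beta>)" and "supp_seq \<psi> B K (Lolli \<alpha> \<beta>)"
  shows "supp B (L + K) (Lolli \<alpha> \<beta>)"
  unfolding supp_Lolli_iff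
proof (intro allI impI)
  fix C M assume "B \<subseteq> C" and "supp_ante \<alpha> C M"
  then have "supp C (L + (K + M)) \<beta>"
    by (intro IH supp_base_mono[OF assms(2)] supp_seq_Lolli_apply[OF assms(3)]
          supp_seq_Lolli_apply[OF assms(4)])
  then show "supp C (L + K + M) \<beta>" by (simp add: ac_simps)
qed

lemma supp_Plus_elim_continuation:
  assumes supp_cont: "\<And>B L. supp B L \<chi> \<longleftrightarrow> (\<forall>C K p. B \<subseteq> C \<longrightarrow> H C K p \<longrightarrow> deriv C (L + K) p)"
    and H_mono: "\<And>C D K p. H C K p \<Longrightarrow> C \<subseteq> D \<Longrightarrow> H D K p"
    and "supp B L (Plus \<phi> \<psi>)" and "supp_seq \<phi> B K \<chi>" and "supp_seq \<psi> B K \<chi>"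
  shows "supp B (L + K) \<chi>"
  unfolding supp_cont
proof (intro allI impI)
  fix C K' p assume "B \<subseteq> C" and "H C K' p"
  have branch: "deriv D (K + K' + M) p"
    if "C \<subseteq> D" and "supp_seq \<theta> B K \<chi>" and "supp_ante \<theta> D M" for D M \<theta>
  proof -
    have "supp D (K + M) \<chi>"
      using that \<open>B \<subseteq> C\<close> unfolding supp_seq_iff by (meson order_trans)
    moreover have "H D K' p" using \<open>H C K' p\<close> \<open>C \<subseteq> D\<close> by (rule H_mono)
    ultimately have "deriv D (K + M + K') p" unfolding supp_cont by blast
    then show ?thesis by (simp add: ac_simps)
  qed
  have "deriv C (L + (K + K')) p"
    using assms(3) \<open>B \<subseteq> C\<close> branch[OF _ assms(4)] branch[OF _ assms(5)]
    unfolding supp_Plus_iff by blast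
  then show "deriv C (L + K + K') p" by (simp add: ac_simps)
qed

theorem lemma7:
  fixes B :: "'a base" and L K :: "'a multiset" and \<phi> \<psi> \<chi> :: "'a form"
  assumes "supp B L (Plus \<phi> \<psi>)"
    and "supp_seq \<phi> B K \<chi>"
    and "supp_seq \<psi> B K \<chi>"
  shows "supp B (L + K) \<chi>"
  using assms
proof (induction \<chi> arbitrary: B L K)
  case Atom then show ?case by (rule supp_Plus_elim_Atom)
next
  case Top then show ?case by simp
next
  case Zero then show ?case by (rule supp_Plus_elim_Zero)
next
  case One
  show ?case by (rule supp_Plus_elim_continuation[OF supp.simps(4) _ One.prems]) (rule deriv_base_mono)
next
  case (Lolli \<alpha> \<beta>)
  show ?case by (rule supp_Plus_elim_Lolli[OF Lolli.IH(2) Lolli.prems])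
next
  case With then show ?case unfolding supp_seq_iff by auto
next
  case Tensor
  show ?case by (rule supp_Plus_elim_continuation[OF supp_Tensor_iff _ Tensor.prems]) (blast intro: order_trans)
next
  case Plus
  show ?case by (rule supp_Plus_elim_continuation[OF supp_Plus_iff _ Plus.prems]) (meson order_trans)
next
  case Bang
  show ?case by (rule supp_Plus_elim_continuation[OF supp.simps(9) _ Bang.prems]) (meson order_trans)
qed

end
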